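(* Let $n>2$ be an integer. For integers $0\le r\le s<n$ and $r<k\le n$ set $$P_{n,r,s}(k)=\begin{cases}\dfrac{r(n-k)}{n(n-1)(k-1)}, & r<k<s,\\[2mm] \dfrac{r(s-1)(n-k)}{n(n-1)(k-1)(k-2)}+\dfrac{r(s-1)}{n(n-1)(k-2)}, & k\ge s,\end{cases}$$ and $$E^{PD,C}_n(r,s)=\sum_{k=r+1}^{n}\left(1-\frac{k}{n}\right)P_{n,r,s}(k),$$ where any term whose denominator vanishes is interpreted as $0$. Let $(\mathcal{M}_1(n),\mathcal{M}_2(n))$ be a point at which $E^{PD,C}_n$ attains its maximum. Let $\beta=0.39422\dots$ be the unique solution in $(0,1)$ of $-2+\frac1\beta+\beta+\log\beta=0$, and let $\alpha=0.17248\dots$ be the unique solution in $(0,\beta)$ of $1-\frac1\beta-2\beta-\frac{\beta^2}{2}+4\alpha-\frac{3\alpha^2}{2}-\log\alpha=0$. Then (i) $\lim_{n\to\infty}\mathcal{M}_1(n)/n=\alpha=0.17248\dots$; (ii) $\lim_{n\to\infty}\mathcal{M}_2(n)/n=\beta=0.39422\dots$; (iii) $\lim_{n\to\infty}E^{PD,C}_n(\mathcal{M}_1(n),\mathcal{M}_2(n))=0.11811\dots$ (namely the value $\frac{\alpha}{2}\left(2-6\beta+\beta^2+4\alpha-\alpha^2+2(1+\beta)\log\beta-2\log\alpha\right)$).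
   Context: $E^{PD,C}_n(r,s)$ is the expected payoff, in the Postdoc secretary problem (goal: select the overall second best of $n$ randomly ordered candidates) with payoff $1-k/n$ when the accepted $k$-th candidate is the overall second best, of the two-threshold strategy: reject the first $r$ candidates, then accept the first candidate better than all preceding ones until the $s$-th interview, and thereafter accept the first candidate which is best or second best among those seen so far. *)

theory Defs
  imports Complex_Main
begin

text \<open>P_{n,r,s}(k); arithmetic is carried out over the reals, and a term whose
  denominator vanishes is 0 (Isabelle convention x / 0 = 0, applied term-wise).\<close>
definition P_pd :: "nat \<Rightarrow> nat \<Rightarrow> nat \<Rightarrow> nat \<Rightarrow> real" where
  "P_pd n r s k =
     (if k < s then
        real r * (real n - real k) / (real n * (real n - 1) * (real k - 1))
      else
        real r * (real s - 1) * (real n - real k)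
          / (real n * (real n - 1) * (real k - 1) * (real k - 2))
        + real r * (real s - 1) / (real n * (real n - 1) * (real k - 2)))"

definition E_pdc :: "nat \<Rightarrow> nat \<Rightarrow> nat \<Rightarrow> real" where
  "E_pdc n r s = (\<Sum>k = r + 1..n. (1 - real k / real n) * P_pd n r s k)"

definition admissible :: "nat \<Rightarrow> nat \<Rightarrow> nat \<Rightarrow> bool" where
  "admissible n r s \<longleftrightarrow> r \<le> s \<and> s < n"

end

theory Submission
  imports Defs
begin

(* For thresholds r = a n and s = b n the payoff E_pdc n r s equals, up to O(1/n), the value
   limit_payoff a b = a (Phi b - phi a) of an explicit continuous function; the comparison rests
   on ln ((c + 1) / (b + 1)) <= 1/(b+1) + ... + 1/c <= ln (c / b). On the triangle
   0 <= a <= b <= 1 this function has a unique, well separated maximum at (\<alpha>, \<beta>): in b it is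
   maximized where Phi' = 0, i.e. at \<beta>, and a \<mapsto> limit_payoff a \<beta> increases up to \<alpha> and
   decreases afterwards.
   Every admissible pair satisfies E_pdc n r s <= limit_payoff x y + 3/(n-1) for a point (x, y)
   within 2/(n-1) of (r/n, s/n), while the pair (floor (\<alpha> n), floor (\<beta> n)) achieves a payoff
   tending to limit_payoff \<alpha> \<beta>. Hence the optimal payoff tends to limit_payoff \<alpha> \<beta>, the points
   (x, y) attached to the maximizers approach the maximum of limit_payoff, and by separation they
   converge to (\<alpha>, \<beta>). *)

section \<open>Partial harmonic sums and closed forms\<close>

lemma sum_inverse_le_ln:
  assumes "1 \<le> b" "b \<le> c"
  shows "(\<Sum>j = Suc b..c. 1 / real j) \<le> ln (real c / real b)"
  using assms(2)
proof (induction c rule: dec_induct)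
  case (step c)
  have c: "0 < real c" using step assms by simp
  have "ln (real c / real (Suc c)) \<le> real c / real (Suc c) - 1"
    by (rule ln_le_minus_one) (use c in simp)
  then have "1 / real (Suc c) \<le> ln (real (Suc c) / real c)"
    using c by (simp add: ln_div field_simps)
  moreover have "ln (real c / real b) + ln (real (Suc c) / real c) = ln (real (Suc c) / real b)"
    using c assms by (simp add: ln_div)
  ultimately show ?case using step by simp
qed simp

lemma ln_le_sum_inverse:
  assumes "b \<le> c"
  shows "ln ((real c + 1) / (real b + 1)) \<le> (\<Sum>j = Suc b..c. 1 / real j)"
  using assms
proof (induction c rule: dec_induct)
  case (step c)
  have "ln ((real c + 2) / (real c + 1)) \<le> 1 / real (Suc c)"
    using ln_le_minus_one[of "(real c + 2) / (real c + 1)"] by (simp add: field_simps)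
  moreover have "ln ((real c + 1) / (real b + 1)) + ln ((real c + 2) / (real c + 1))
        = ln ((real (Suc c) + 1) / (real b + 1))"
    by (simp add: ln_div add.commute)
  ultimately show ?case using step by simp
qed simp

lemma sum_sq_dist_div:
  fixes N :: real
  assumes "1 \<le> a" "a \<le> b"
  shows "(\<Sum>j = a..b. (N - real j)^2 / real j) =
    N^2 * (\<Sum>j = a..b. 1 / real j) - 2 * N * (real b + 1 - real a)
    + (real b * (real b + 1) - (real a - 1) * real a) / 2"
  using assms(2)
proof (induction b rule: dec_induct)
  case base
  have "real a \<noteq> 0" using assms by simp
  then show ?case by (simp add: field_simps power2_eq_square)
next
  case (step b)
  define u where "u = 1 / real (Suc b)"
  have split: "(\<Sum>j = a..Suc b. g j) = (\<Sum>j = a..b. g j) + g (Suc b)"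
    for g :: "nat \<Rightarrow> real"
    using step by simp
  have "(N - real (Suc b))^2 / real (Suc b) = N^2 * u - 2 * N + (real b + 1)"
    unfolding u_def by (simp add: field_simps power2_eq_square)
  then have "(\<Sum>j = a..Suc b. (N - real j)^2 / real j)
      = (\<Sum>j = a..b. (N - real j)^2 / real j) + (N^2 * u - 2 * N + (real b + 1))"
    by (simp only: split)
  also have "\<dots> = N^2 * ((\<Sum>j = a..b. 1 / real j) + u) - 2 * N * (real (Suc b) + 1 - real a)
      + (real (Suc b) * (real (Suc b) + 1) - (real a - 1) * real a) / 2"
    unfolding step.IH by (simp add: algebra_simps) (simp add: field_simps)
  also have "(\<Sum>j = a..b. 1 / real j) + u = (\<Sum>j = a..Suc b. 1 / real j)"
    by (simp only: split u_def)
  finally show ?case .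
qed

lemma partial_fractions:
  fixes c x :: real
  assumes "x \<noteq> 1" "x \<noteq> 2"
  shows "(c - x) / ((x - 1) * (x - 2)) = (c - 1) / (x - 2) - (c - 1) / (x - 1) - 1 / (x - 2)"
proof -
  have "x - 1 \<noteq> 0" "x - 2 \<noteq> 0" using assms by auto
  then show ?thesis
    by (simp add: diff_divide_distrib[symmetric] divide_simps) (simp add: algebra_simps)
qed

lemma sum_telescoping:
  assumes "3 \<le> m" "m \<le> n"
  shows "(\<Sum>k = m..n. (real n - real k) / ((real k - 1) * (real k - 2))) =
     (real n - 1) / (real m - 2) - 1 - (\<Sum>j = m - 2..n - 2. 1 / real j)"
  using assms(2,1)
proof (induction m rule: inc_induct)
  case base
  then have "real n - 2 \<noteq> 0" "real (n - 2) = real n - 2" by auto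
  then have "(real n - 1) / (real n - 2) - 1 - 1 / (real n - 2) = 0"
    by (simp add: field_simps)
  then show ?case using \<open>real (n - 2) = real n - 2\<close> by simp
next
  case (step m)
  have m: "real m \<noteq> 1" "real m \<noteq> 2" "real (m - 2) = real m - 2" "Suc (m - 2) = Suc m - 2"
    using step by auto
  have "(\<Sum>j = m - 2..n - 2. 1 / real j) = 1 / real (m - 2) + (\<Sum>j = Suc m - 2..n - 2. 1 / real j)"
    using step m(4) by (subst sum.atLeast_Suc_atMost) auto
  then show ?case
    using step partial_fractions[OF m(1,2), of "real n"] m(3,4) by (simp add: sum.atLeast_Suc_atMost)
qed

section \<open>The limiting payoff\<close>

lemma less_by_DERIV_pos:
  fixes f f' :: "real \<Rightarrow> real"
  assumes "a < b" "\<And>x. a \<le> x \<Longrightarrow> x \<le> b \<Longrightarrow> DERIV f x :> f' x"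
    and "\<And>x. a < x \<Longrightarrow> x < b \<Longrightarrow> 0 < f' x"
  shows "f a < f b"
proof (rule DERIV_pos_imp_increasing_open[OF assms(1)])
  fix x assume "a < x" "x < b"
  then show "\<exists>y. DERIV f x :> y \<and> 0 < y" using assms by (intro exI[of _ "f' x"]) auto
qed (use assms in \<open>blast intro: DERIV_atLeastAtMost_imp_continuous_on\<close>)

lemma less_by_DERIV_neg:
  fixes f f' :: "real \<Rightarrow> real"
  assumes "a < b" "\<And>x. a \<le> x \<Longrightarrow> x \<le> b \<Longrightarrow> DERIV f x :> f' x"
    and "\<And>x. a < x \<Longrightarrow> x < b \<Longrightarrow> f' x < 0"
  shows "f b < f a"
proof (rule DERIV_neg_imp_decreasing_open[OF assms(1)])
  fix x assume "a < x" "x < b"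
  then show "\<exists>y. DERIV f x :> y \<and> y < 0" using assms by (intro exI[of _ "f' x"]) auto
qed (use assms in \<open>blast intro: DERIV_atLeastAtMost_imp_continuous_on\<close>)

lemma le_by_DERIV_nonneg:
  fixes f f' :: "real \<Rightarrow> real"
  assumes "a \<le> b" "\<And>x. a \<le> x \<Longrightarrow> x \<le> b \<Longrightarrow> DERIV f x :> f' x"
    and "\<And>x. a \<le> x \<Longrightarrow> x \<le> b \<Longrightarrow> 0 \<le> f' x"
  shows "f a \<le> f b"
  by (rule DERIV_nonneg_imp_nondecreasing[OF assms(1)]) (use assms in blast)

lemma le_by_DERIV_nonpos:
  fixes f f' :: "real \<Rightarrow> real"
  assumes "a \<le> b" "\<And>x. a \<le> x \<Longrightarrow> x \<le> b \<Longrightarrow> DERIV f x :> f' x"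
    and "\<And>x. a \<le> x \<Longrightarrow> x \<le> b \<Longrightarrow> f' x \<le> 0"
  shows "f b \<le> f a"
  by (rule DERIV_nonpos_imp_nonincreasing[OF assms(1)]) (use assms in blast)

(* With a = r/n and b = s/n, the first phase contributes a (phi b - phi a) to E_pdc n r s
   and the second phase a chi b, up to O(1/n). *)
definition phi :: "real \<Rightarrow> real" where "phi x = ln x - 2*x + x^2/2"
definition chi :: "real \<Rightarrow> real" where "chi y = 1 - y + y * ln y"
definition Phi :: "real \<Rightarrow> real" where "Phi y = (1 + y) * ln y - 3*y + y^2/2 + 1"
definition psi :: "real \<Rightarrow> real" where "psi u = 1/u - 1 + ln u"
definition dPhi :: "real \<Rightarrow> real" where "dPhi y = ln y + 1/y - 2 + y"

definition limit_payoff :: "real \<Rightarrow> real \<Rightarrow> real" where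
  "limit_payoff a b = a * (Phi b - phi a)"

lemma Phi_eq_phi_add_chi: "Phi y = phi y + chi y"
  unfolding Phi_def phi_def chi_def by (simp add: algebra_simps)

lemma limit_payoff_diag: "limit_payoff y y = y * chi y"
  unfolding limit_payoff_def Phi_eq_phi_add_chi by simp

lemma DERIV_phi: "0 < x \<Longrightarrow> DERIV phi x :> (1 - x)^2 / x"
  unfolding phi_def[abs_def]
  by (auto intro!: derivative_eq_intros simp: field_simps power2_eq_square)

lemma phi_mono: assumes "0 < x" "x \<le> y" shows "phi x \<le> phi y"
proof (rule le_by_DERIV_nonneg[where f = phi and f' = "\<lambda>t. (1 - t)^2 / t", OF assms(2)])
  fix t assume "x \<le> t" "t \<le> y"
  then show "DERIV phi t :> (1 - t)^2 / t" "0 \<le> (1 - t)^2 / t" using assms by (auto intro: DERIV_phi)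
qed

lemma DERIV_Phi: "0 < x \<Longrightarrow> DERIV Phi x :> dPhi x"
  unfolding Phi_def[abs_def] dPhi_def
  by (auto intro!: derivative_eq_intros simp: field_simps power2_eq_square)

lemma DERIV_dPhi: "0 < x \<Longrightarrow> DERIV dPhi x :> (x^2 + x - 1) / x^2"
  unfolding dPhi_def[abs_def]
  by (auto intro!: derivative_eq_intros simp: field_simps power2_eq_square)

definition gold :: real where "gold = (sqrt 5 - 1) / 2"

lemma gold_bounds: "1/2 < gold" "gold < 1"
proof -
  have "2 < sqrt (5::real)" "sqrt (5::real) < 3"
    by (simp_all add: real_less_rsqrt real_less_lsqrt)
  then show "1/2 < gold" "gold < 1" unfolding gold_def by simp_all
qed

lemma gold_sq: "gold^2 + gold = 1"
proof -
  have "sqrt 5 * sqrt 5 = (5::real)" by simp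
  then show ?thesis unfolding gold_def power2_eq_square by (simp add: algebra_simps) (simp add: field_simps)
qed

lemma sq_add_less_one: "0 \<le> x \<Longrightarrow> x < gold \<Longrightarrow> x^2 + x < 1"
  using gold_sq power_strict_mono[of x gold 2] by simp

lemma sq_add_gt_one: "gold < x \<Longrightarrow> 1 < x^2 + x"
  using gold_sq power_strict_mono[of gold x 2] gold_bounds by simp

lemma dPhi_decreasing: assumes "0 < x" "x < y" "y \<le> gold" shows "dPhi y < dPhi x"
proof (rule less_by_DERIV_neg[where f = dPhi and f' = "\<lambda>t. (t^2 + t - 1) / t^2", OF assms(2)])
  fix t assume "x \<le> t" "t \<le> y" then show "DERIV dPhi t :> (t^2 + t - 1) / t^2"
    using assms by (intro DERIV_dPhi) simp
next
  fix t assume "x < t" "t < y" then show "(t^2 + t - 1) / t^2 < 0"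
    using assms sq_add_less_one[of t] by (simp add: divide_neg_pos)
qed

lemma dPhi_increasing: assumes "gold \<le> x" "x < y" shows "dPhi x < dPhi y"
proof (rule less_by_DERIV_pos[where f = dPhi and f' = "\<lambda>t. (t^2 + t - 1) / t^2", OF assms(2)])
  fix t assume "x \<le> t" "t \<le> y" then show "DERIV dPhi t :> (t^2 + t - 1) / t^2"
    using assms gold_bounds by (intro DERIV_dPhi) simp
next
  fix t assume "x < t" "t < y" then show "0 < (t^2 + t - 1) / t^2"
    using assms sq_add_gt_one[of t] by (intro divide_pos_pos) auto
qed

lemma dPhi_one: "dPhi 1 = 0" by (simp add: dPhi_def)

lemma dPhi_half: "dPhi (1/2) < 0"
proof -
  have "ln (1/2::real) \<noteq> 1/2 - 1" using ln_eq_minus_one[of "1/2::real"] by auto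
  then have "ln (1/2::real) < 1/2 - 1" using ln_le_minus_one[of "1/2::real"] by simp
  then show ?thesis unfolding dPhi_def by simp
qed

lemma psi_nonneg: "0 < u \<Longrightarrow> u \<le> 1 \<Longrightarrow> 0 \<le> psi u"
  using ln_le_minus_one[of "1/u"] by (simp add: psi_def ln_div)

lemma psi_le_inverse: "0 < u \<Longrightarrow> u \<le> 1 \<Longrightarrow> psi u \<le> 1/u"
  using ln_le_minus_one[of u] by (simp add: psi_def)

lemma chi_eq: "u \<noteq> 0 \<Longrightarrow> chi u = u * psi u"
  unfolding chi_def psi_def by (simp add: field_simps)

lemma chi_nonneg: "0 < u \<Longrightarrow> u \<le> 1 \<Longrightarrow> 0 \<le> chi u"
  using psi_nonneg chi_eq by simp

lemma chi_le_one: "0 < u \<Longrightarrow> u \<le> 1 \<Longrightarrow> chi u \<le> 1"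
  unfolding chi_def using mult_nonneg_nonpos[of u "ln u"] ln_le_minus_one[of u] by simp

lemma DERIV_mult_chi: "0 < y \<Longrightarrow> DERIV (\<lambda>y. y * chi y) y :> 1 - y + 2 * y * ln y"
  unfolding chi_def by (auto intro!: derivative_eq_intros simp: field_simps)

lemma DERIV_deriv_mult_chi:
  "0 < y \<Longrightarrow> DERIV (\<lambda>t::real. 1 - t + 2 * t * ln t) y :> 1 + 2 * ln y"
  by (auto intro!: derivative_eq_intros)

definition dpayoff :: "real \<Rightarrow> real \<Rightarrow> real" where
  "dpayoff a b = Phi b - 1 + 4*a - 3*a^2/2 - ln a"

lemma DERIV_limit_payoff: "0 < a \<Longrightarrow> DERIV (\<lambda>a. limit_payoff a b) a :> dpayoff a b"
  unfolding limit_payoff_def[abs_def] dpayoff_def phi_def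
  by (auto intro!: derivative_eq_intros simp: field_simps power2_eq_square)

lemma DERIV_dpayoff: "0 < a \<Longrightarrow> DERIV (\<lambda>a. dpayoff a b) a :> - 1/a + 4 - 3*a"
  unfolding dpayoff_def
  by (auto intro!: derivative_eq_intros simp: field_simps power2_eq_square)

lemma limit_payoff_explicit:
  "limit_payoff a b = a/2 * (2 - 6*b + b^2 + 4*a - a^2 + 2*(1+b)*ln b - 2*ln a)"
  unfolding limit_payoff_def Phi_def phi_def by (simp add: algebra_simps power2_eq_square)

lemma dpayoff_strict_antimono: assumes "0 < x" "x < y" "y \<le> 1/3" shows "dpayoff y b < dpayoff x b"
proof (rule less_by_DERIV_neg[where f' = "\<lambda>t. - 1/t + 4 - 3*t", OF assms(2)])
  fix t assume "x \<le> t" "t \<le> y"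
  then show "DERIV (\<lambda>a. dpayoff a b) t :> - 1/t + 4 - 3*t" using assms by (intro DERIV_dpayoff) simp
next
  fix t assume t: "x < t" "t < y"
  then have "0 < (1 - 3*t) * (1 - t)" using assms by (intro mult_pos_pos) auto
  then have "0 < (1 - 3*t) * (1 - t) / t" using t assms by simp
  moreover have "(1 - 3*t) * (1 - t) / t = 1/t - 4 + 3*t" using t assms by (simp add: field_simps)
  ultimately show "- 1/t + 4 - 3*t < 0" by simp
qed

lemma dpayoff_strict_mono: assumes "1/3 \<le> x" "x < y" "y \<le> 1" shows "dpayoff x b < dpayoff y b"
proof (rule less_by_DERIV_pos[where f' = "\<lambda>t. - 1/t + 4 - 3*t", OF assms(2)])
  fix t assume "x \<le> t" "t \<le> y"
  then show "DERIV (\<lambda>a. dpayoff a b) t :> - 1/t + 4 - 3*t" using assms by (intro DERIV_dpayoff) simp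
next
  fix t assume t: "x < t" "t < y"
  then have "0 < (3*t - 1) * (1 - t)" using assms by (intro mult_pos_pos) auto
  then have "0 < (3*t - 1) * (1 - t) / t" using t assms by simp
  moreover have "(3*t - 1) * (1 - t) / t = - 1/t + 4 - 3*t" using t assms by (simp add: field_simps)
  ultimately show "0 < - 1/t + 4 - 3*t" by simp
qed

locale beta_threshold =
  fixes \<beta> :: real
  assumes beta_pos: "0 < \<beta>" and beta_less_one: "\<beta> < 1" and dPhi_beta: "dPhi \<beta> = 0"
begin

lemma beta_less_gold: "\<beta> < gold"
  using dPhi_increasing[of \<beta> 1] beta_less_one dPhi_beta dPhi_one by linarith

lemma dPhi_pos: "0 < b \<Longrightarrow> b < \<beta> \<Longrightarrow> 0 < dPhi b"
  using dPhi_decreasing[of b \<beta>] beta_less_gold dPhi_beta by simp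

lemma dPhi_neg: assumes "\<beta> < b" "b < 1" shows "dPhi b < 0"
proof (cases "b \<le> gold")
  case True then show ?thesis using dPhi_decreasing[of \<beta> b] beta_pos assms dPhi_beta by simp
next
  case False then show ?thesis using dPhi_increasing[of b 1] assms dPhi_one by simp
qed

lemma beta_less_half: "\<beta> < 1/2"
  using dPhi_pos[of "1/2"] dPhi_half dPhi_beta by (cases "1/2::real" \<beta> rule: linorder_cases) auto

lemma ln_beta: "ln \<beta> = 2 - 1/\<beta> - \<beta>"
  using dPhi_beta by (simp add: dPhi_def)

lemma Phi_beta: "Phi \<beta> = 2 - 1/\<beta> - 2*\<beta> - \<beta>^2/2"
  unfolding Phi_def ln_beta using beta_pos by (simp add: field_simps power2_eq_square)

lemma Phi_strict_mono_below: assumes "0 < x" "x < y" "y \<le> \<beta>" shows "Phi x < Phi y"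
proof (rule less_by_DERIV_pos[where f' = dPhi, OF assms(2)])
  fix t assume "x \<le> t" "t \<le> y"
  then show "DERIV Phi t :> dPhi t" using assms by (intro DERIV_Phi) simp
next
  fix t assume "x < t" "t < y" then show "0 < dPhi t" using assms by (intro dPhi_pos) auto
qed

lemma Phi_strict_antimono_above: assumes "\<beta> \<le> x" "x < y" "y \<le> 1" shows "Phi y < Phi x"
proof (rule less_by_DERIV_neg[where f' = dPhi, OF assms(2)])
  fix t assume "x \<le> t" "t \<le> y"
  then show "DERIV Phi t :> dPhi t" using assms beta_pos by (intro DERIV_Phi) simp
next
  fix t assume "x < t" "t < y" then show "dPhi t < 0" using assms by (intro dPhi_neg) auto
qed

lemma Phi_le_Phi_beta: assumes "0 < b" "b \<le> 1" shows "Phi b \<le> Phi \<beta>"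
  using Phi_strict_mono_below[of b \<beta>] Phi_strict_antimono_above[of \<beta> b] assms
  by (cases b \<beta> rule: linorder_cases) auto

lemma Phi_separation:
  assumes "0 < \<epsilon>"
  shows "\<exists>\<delta>>0. \<forall>b. 0 < b \<and> b \<le> 1 \<and> \<epsilon> \<le> \<bar>b - \<beta>\<bar> \<longrightarrow> Phi b \<le> Phi \<beta> - \<delta>"
proof -
  define e where "e = min \<epsilon> (min (\<beta>/2) ((1-\<beta>)/2))"
  have e: "0 < e" "e \<le> \<epsilon>" "e \<le> \<beta>/2" "e \<le> (1-\<beta>)/2"
    using assms beta_pos beta_less_one unfolding e_def by (auto simp: min_def)
  define M where "M = max (Phi (\<beta> - e)) (Phi (\<beta> + e))"
  have "M < Phi \<beta>"
    using Phi_strict_mono_below[of "\<beta> - e" \<beta>] Phi_strict_antimono_above[of \<beta> "\<beta> + e"] e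
    by (simp add: M_def)
  moreover have "Phi b \<le> M" if b: "0 < b" "b \<le> 1" "\<epsilon> \<le> \<bar>b - \<beta>\<bar>" for b
  proof -
    consider "b \<le> \<beta> - e" | "\<beta> + e \<le> b" using b e by linarith
    then show ?thesis
    proof cases
      case 1 then show ?thesis
        using Phi_strict_mono_below[of b "\<beta> - e"] b e by (cases "b = \<beta> - e") (auto simp: M_def)
    next
      case 2 then show ?thesis
        using Phi_strict_antimono_above[of "\<beta> + e" b] b e by (cases "b = \<beta> + e") (auto simp: M_def)
    qed
  qed
  ultimately show ?thesis by (intro exI[of _ "Phi \<beta> - M"]) force
qed

(* t \<mapsto> 1 - t + 2 t ln t decreases up to exp (-1/2) and increases after it;
   it is negative at \<beta> and vanishes at 1. *)
lemma deriv_mult_chi_nonpos: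
  assumes "\<beta> \<le> t" "t \<le> 1"
  shows "1 - t + 2 * t * ln t \<le> 0"
proof -
  define k :: "real \<Rightarrow> real" where "k t = 1 - t + 2 * t * ln t" for t
  have k_deriv: "DERIV k x :> 1 + 2 * ln x" if "0 < x" for x
    unfolding k_def[abs_def] using that by (rule DERIV_deriv_mult_chi)
  have "k t \<le> 0"
  proof (cases "t \<le> exp (-1/2)")
    case True
    have "k t \<le> k \<beta>"
    proof (rule le_by_DERIV_nonpos[OF assms(1)])
      fix x assume "\<beta> \<le> x" "x \<le> t"
      then show "DERIV k x :> 1 + 2 * ln x" "1 + 2 * ln x \<le> 0"
        using True beta_pos k_deriv ln_le_cancel_iff[of x "exp (-1/2)"] by auto
    qed
    moreover have "k \<beta> = - ((1 - \<beta>) * (1 - 2*\<beta>))"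
      unfolding k_def ln_beta using beta_pos by (simp add: algebra_simps)
    moreover have "0 < (1 - \<beta>) * (1 - 2*\<beta>)" using beta_less_one beta_less_half by simp
    ultimately show ?thesis by simp
  next
    case False
    have "k t \<le> k 1"
    proof (rule le_by_DERIV_nonneg[OF assms(2)])
      fix x assume x: "t \<le> x" "x \<le> 1"
      then have "0 < x" using False exp_gt_zero[of "-1/2"] by linarith
      then show "DERIV k x :> 1 + 2 * ln x" "0 \<le> 1 + 2 * ln x"
        using False x k_deriv ln_le_cancel_iff[of "exp (-1/2)" x] by auto
    qed
    then show ?thesis by (simp add: k_def)
  qed
  then show ?thesis by (simp add: k_def)
qed

lemma mult_chi_le_beta: assumes "\<beta> \<le> a" "a \<le> 1" shows "a * chi a \<le> \<beta> * chi \<beta>"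
proof (rule le_by_DERIV_nonpos[where f' = "\<lambda>t. 1 - t + 2 * t * ln t", OF assms(1)])
  fix t assume "\<beta> \<le> t" "t \<le> a"
  then show "DERIV (\<lambda>y. y * chi y) t :> 1 - t + 2 * t * ln t" "1 - t + 2 * t * ln t \<le> 0"
    using assms beta_pos by (auto intro: DERIV_mult_chi deriv_mult_chi_nonpos)
qed

end

locale alpha_beta_thresholds = beta_threshold +
  fixes \<alpha> :: real
  assumes alpha_pos: "0 < \<alpha>" and alpha_less_beta: "\<alpha> < \<beta>" and dpayoff_alpha: "dpayoff \<alpha> \<beta> = 0"
begin

lemma dpayoff_beta: "dpayoff \<beta> \<beta> < 0"
proof -
  have "dpayoff \<beta> \<beta> = - ((1 - \<beta>) * (1 - 2*\<beta>))"
    unfolding dpayoff_def Phi_beta ln_beta by (simp add: algebra_simps power2_eq_square)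
  moreover have "0 < (1 - \<beta>) * (1 - 2*\<beta>)" using beta_less_one beta_less_half by simp
  ultimately show ?thesis by simp
qed

lemma alpha_less_third: "\<alpha> < 1/3"
  using dpayoff_strict_mono[of \<alpha> \<beta> \<beta>] alpha_less_beta beta_less_one dpayoff_alpha dpayoff_beta
  by fastforce

lemma dpayoff_pos: "0 < a \<Longrightarrow> a < \<alpha> \<Longrightarrow> 0 < dpayoff a \<beta>"
  using dpayoff_strict_antimono[of a \<alpha> \<beta>] alpha_less_third dpayoff_alpha by simp

lemma dpayoff_neg: assumes "\<alpha> < a" "a < \<beta>" shows "dpayoff a \<beta> < 0"
proof (cases "a \<le> 1/3")
  case True then show ?thesis
    using dpayoff_strict_antimono[of \<alpha> a \<beta>] alpha_pos assms dpayoff_alpha by simp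
next
  case False then show ?thesis
    using dpayoff_strict_mono[of a \<beta> \<beta>] assms beta_less_one dpayoff_beta by simp
qed

lemma limit_payoff_strict_mono_below:
  assumes "0 < x" "x < y" "y \<le> \<alpha>" shows "limit_payoff x \<beta> < limit_payoff y \<beta>"
proof (rule less_by_DERIV_pos[where f' = "\<lambda>a. dpayoff a \<beta>", OF assms(2)])
  fix t assume "x \<le> t" "t \<le> y"
  then show "DERIV (\<lambda>a. limit_payoff a \<beta>) t :> dpayoff t \<beta>" using assms by (intro DERIV_limit_payoff) simp
next
  fix t assume "x < t" "t < y"
  then show "0 < dpayoff t \<beta>" using assms by (intro dpayoff_pos) auto
qed

lemma limit_payoff_strict_antimono_above:
  assumes "\<alpha> \<le> x" "x < y" "y \<le> \<beta>" shows "limit_payoff y \<beta> < limit_payoff x \<beta>"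
proof (rule less_by_DERIV_neg[where f' = "\<lambda>a. dpayoff a \<beta>", OF assms(2)])
  fix t assume "x \<le> t" "t \<le> y"
  then show "DERIV (\<lambda>a. limit_payoff a \<beta>) t :> dpayoff t \<beta>"
    using assms alpha_pos by (intro DERIV_limit_payoff) simp
next
  fix t assume "x < t" "t < y"
  then show "dpayoff t \<beta> < 0" using assms by (intro dpayoff_neg) auto
qed

lemma limit_payoff_le_at_alpha: assumes "0 < a" "a \<le> \<beta>" shows "limit_payoff a \<beta> \<le> limit_payoff \<alpha> \<beta>"
  using limit_payoff_strict_mono_below[of a \<alpha>] limit_payoff_strict_antimono_above[of \<alpha> a] assms
  by (cases a \<alpha> rule: linorder_cases) auto

lemma limit_payoff_le_at_beta:
  assumes "0 \<le> a" "0 < b" "b \<le> 1" shows "limit_payoff a b \<le> limit_payoff a \<beta>"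
  using Phi_le_Phi_beta[of b] assms by (simp add: limit_payoff_def mult_left_mono)

lemma limit_payoff_nonneg: assumes "0 < a" "a \<le> 1" shows "0 \<le> limit_payoff a \<beta>"
proof -
  have "0 \<le> a * chi a" using chi_nonneg[of a] assms by simp
  then show ?thesis using limit_payoff_le_at_beta[of a a] assms by (simp add: limit_payoff_diag)
qed

lemma limit_payoff_le_beta_beta:
  assumes "\<beta> \<le> a" "a \<le> b" "b \<le> 1" shows "limit_payoff a b \<le> limit_payoff \<beta> \<beta>"
proof -
  have "Phi b \<le> Phi a"
    using Phi_strict_antimono_above[of a b] assms by (cases "a = b") auto
  then have "limit_payoff a b \<le> limit_payoff a a"
    unfolding limit_payoff_def using assms beta_pos by (simp add: mult_left_mono)
  also have "\<dots> \<le> limit_payoff \<beta> \<beta>"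
    using mult_chi_le_beta assms by (simp add: limit_payoff_diag)
  finally show ?thesis .
qed

lemma limit_payoff_beta_beta_less: "limit_payoff \<beta> \<beta> < limit_payoff \<alpha> \<beta>"
  using limit_payoff_strict_antimono_above[of \<alpha> \<beta>] alpha_less_beta by simp

lemma limit_payoff_le_max:
  assumes "0 \<le> a" "a \<le> b" "b \<le> 1" shows "limit_payoff a b \<le> limit_payoff \<alpha> \<beta>"
proof -
  consider "a = 0" | "0 < a" "a < \<beta>" | "\<beta> \<le> a" using assms by linarith
  then show ?thesis
  proof cases
    case 1 then show ?thesis
      using limit_payoff_nonneg[of \<alpha>] alpha_pos alpha_less_beta beta_less_one
      by (simp add: limit_payoff_def)
  next
    case 2 then show ?thesis
      using limit_payoff_le_at_beta[of a b] limit_payoff_le_at_alpha[of a] assms by simp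
  next
    case 3 then show ?thesis
      using limit_payoff_le_beta_beta[of a b] limit_payoff_beta_beta_less assms by simp
  qed
qed

lemma limit_payoff_separation_alpha:
  assumes "0 < \<epsilon>"
  shows "\<exists>\<delta>>0. \<forall>a b. 0 \<le> a \<and> a \<le> b \<and> b \<le> 1 \<and> \<epsilon> \<le> \<bar>a - \<alpha>\<bar> \<longrightarrow>
           limit_payoff a b \<le> limit_payoff \<alpha> \<beta> - \<delta>"
proof -
  define e where "e = min \<epsilon> (min (\<alpha>/2) ((\<beta>-\<alpha>)/2))"
  have e: "0 < e" "e \<le> \<epsilon>" "e \<le> \<alpha>/2" "e \<le> (\<beta>-\<alpha>)/2"
    using assms alpha_pos alpha_less_beta unfolding e_def by (auto simp: min_def)
  define M where
    "M = max (limit_payoff (\<alpha> - e) \<beta>) (max (limit_payoff (\<alpha> + e) \<beta>) (limit_payoff \<beta> \<beta>))"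
  have "M < limit_payoff \<alpha> \<beta>"
    using limit_payoff_strict_mono_below[of "\<alpha> - e" \<alpha>]
      limit_payoff_strict_antimono_above[of \<alpha> "\<alpha> + e"] limit_payoff_beta_beta_less e
    by (simp add: M_def)
  moreover have "limit_payoff a b \<le> M"
    if ab: "0 \<le> a" "a \<le> b" "b \<le> 1" "\<epsilon> \<le> \<bar>a - \<alpha>\<bar>" for a b
  proof -
    consider "a = 0" | "0 < a" "a \<le> \<alpha> - e" | "\<alpha> + e \<le> a" "a < \<beta>" | "\<beta> \<le> a"
      using ab e by linarith
    then show ?thesis
    proof cases
      case 1 then show ?thesis
        using limit_payoff_nonneg[of "\<alpha> - e"] e alpha_less_beta beta_less_one
        by (simp add: limit_payoff_def M_def)
    next
      case 2
      then have "limit_payoff a \<beta> \<le> limit_payoff (\<alpha> - e) \<beta>"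
        using limit_payoff_strict_mono_below[of a "\<alpha> - e"] e by (cases "a = \<alpha> - e") auto
      then show ?thesis using limit_payoff_le_at_beta[of a b] 2 ab by (simp add: M_def)
    next
      case 3
      then have "limit_payoff a \<beta> \<le> limit_payoff (\<alpha> + e) \<beta>"
        using limit_payoff_strict_antimono_above[of "\<alpha> + e" a] e alpha_pos by (cases "a = \<alpha> + e") auto
      then show ?thesis using limit_payoff_le_at_beta[of a b] 3 ab e alpha_pos by (simp add: M_def)
    next
      case 4 then show ?thesis using limit_payoff_le_beta_beta[of a b] ab by (simp add: M_def)
    qed
  qed
  ultimately show ?thesis by (intro exI[of _ "limit_payoff \<alpha> \<beta> - M"]) force
qed

lemma limit_payoff_separation:
  assumes "0 < \<epsilon>"
  shows "\<exists>\<delta>>0. \<forall>a b. 0 \<le> a \<and> a \<le> b \<and> b \<le> 1 \<longrightarrow> (\<epsilon> \<le> \<bar>a - \<alpha>\<bar> \<or> \<epsilon> \<le> \<bar>b - \<beta>\<bar>) \<longrightarrow>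
           limit_payoff a b \<le> limit_payoff \<alpha> \<beta> - \<delta>"
proof -
  define \<epsilon>' where "\<epsilon>' = min \<epsilon> (min (\<alpha>/2) (\<beta> - \<alpha>))"
  have "0 < \<epsilon>'" using assms alpha_pos alpha_less_beta by (simp add: \<epsilon>'_def)
  then obtain \<delta>\<^sub>1 where \<delta>\<^sub>1: "0 < \<delta>\<^sub>1" "\<And>a b. 0 \<le> a \<and> a \<le> b \<and> b \<le> 1 \<and> \<epsilon>' \<le> \<bar>a - \<alpha>\<bar> \<Longrightarrow>
      limit_payoff a b \<le> limit_payoff \<alpha> \<beta> - \<delta>\<^sub>1"
    using limit_payoff_separation_alpha by blast
  obtain \<delta>\<^sub>2 where \<delta>\<^sub>2: "0 < \<delta>\<^sub>2" "\<And>b. 0 < b \<and> b \<le> 1 \<and> \<epsilon> \<le> \<bar>b - \<beta>\<bar> \<Longrightarrow> Phi b \<le> Phi \<beta> - \<delta>\<^sub>2"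
    using Phi_separation[OF assms] by blast
  have "limit_payoff a b \<le> limit_payoff \<alpha> \<beta> - min \<delta>\<^sub>1 (\<alpha>/2 * \<delta>\<^sub>2)"
    if ab: "0 \<le> a" "a \<le> b" "b \<le> 1" and far: "\<epsilon> \<le> \<bar>a - \<alpha>\<bar> \<or> \<epsilon> \<le> \<bar>b - \<beta>\<bar>" for a b
  proof (cases "\<epsilon>' \<le> \<bar>a - \<alpha>\<bar>")
    case True then show ?thesis using \<delta>\<^sub>1 ab by fastforce
  next
    case False
    then have a: "\<alpha>/2 < a" "a < \<beta>" "\<bar>a - \<alpha>\<bar> < \<epsilon>" unfolding \<epsilon>'_def by auto
    then have "Phi b \<le> Phi \<beta> - \<delta>\<^sub>2" using \<delta>\<^sub>2(2)[of b] far ab alpha_pos by auto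
    then have "\<alpha>/2 * \<delta>\<^sub>2 \<le> a * (Phi \<beta> - Phi b)"
      using a \<delta>\<^sub>2(1) alpha_pos by (intro mult_mono) auto
    moreover have "limit_payoff a b = limit_payoff a \<beta> - a * (Phi \<beta> - Phi b)"
      by (simp add: limit_payoff_def algebra_simps)
    moreover have "limit_payoff a \<beta> \<le> limit_payoff \<alpha> \<beta>"
      using limit_payoff_le_at_alpha[of a] a alpha_pos by simp
    ultimately show ?thesis by linarith
  qed
  moreover have "0 < min \<delta>\<^sub>1 (\<alpha>/2 * \<delta>\<^sub>2)" using \<delta>\<^sub>1 \<delta>\<^sub>2 alpha_pos by simp
  ultimately show ?thesis by blast
qed

end

section \<open>Upper and lower bounds for E_pdc\<close>

lemma E_pdc_zero: "E_pdc n 0 s = 0"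
  unfolding E_pdc_def P_pd_def by (intro sum.neutral) simp

lemma second_phase_term:
  fixes k n c :: real
  assumes "n \<noteq> 0" "n - 1 \<noteq> 0" "k - 1 \<noteq> 0" "k - 2 \<noteq> 0"
  shows "(1 - k/n) * (c * (n - k) / (n * (n - 1) * (k - 1) * (k - 2)) + c / (n * (n - 1) * (k - 2)))
     = c / n^2 * ((n - k) / ((k - 1) * (k - 2)))"
proof -
  have merge: "c * x / (n * a * b * d) + c / (n * a * d) = c / (n * b * d)"
    if "a \<noteq> 0" "b \<noteq> 0" "d \<noteq> 0" "x + b = a" for a b d x :: real
  proof -
    have "c * x / (n * a * b * d) + c / (n * a * d) = (c * x + c * b) / (n * a * b * d)"
      using that assms(1) by (simp add: add_divide_distrib)
    also have "c * x + c * b = c * a" by (simp add: algebra_simps flip: that(4))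
    finally show ?thesis using that assms(1) by simp
  qed
  have "1 - k/n = (n - k) / n" using assms by (simp add: field_simps)
  then show ?thesis
    using merge[OF assms(2-4), of "n - k"] assms by (simp add: power2_eq_square mult_ac)
qed

lemma E_pdc_split:
  assumes "3 \<le> n" "1 \<le> r" "r \<le> s" "s < n"
  shows "E_pdc n r s =
    real r / (real n^2 * (real n - 1)) * (\<Sum>j = r..s - 2. (real n - 1 - real j)^2 / real j)
    + real r * (real s - 1) / real n^2 *
      (\<Sum>k = max (max s (r+1)) 3..n. (real n - real k) / ((real k - 1) * (real k - 2)))"
proof -
  define f where "f k = (1 - real k / real n) * P_pd n r s k" for k
  have n: "real n \<noteq> 0" "real n - 1 \<noteq> 0" using assms by simp_all
  have "{r+1..n} = {Suc r..Suc (s - 2)} \<union> {max s (r+1)..n}"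
    "{Suc r..Suc (s - 2)} \<inter> {max s (r+1)..n} = {}" using assms by auto
  then have "E_pdc n r s = sum f {Suc r..Suc (s - 2)} + sum f {max s (r+1)..n}"
    unfolding E_pdc_def f_def[abs_def] by (simp add: sum.union_disjoint)
  also have "sum f {Suc r..Suc (s - 2)} =
      real r / (real n^2 * (real n - 1)) * (\<Sum>j = r..s - 2. (real n - 1 - real j)^2 / real j)"
    unfolding sum.shift_bounds_cl_Suc_ivl sum_distrib_left
  proof (rule sum.cong[OF refl])
    fix j assume j: "j \<in> {r..s - 2}"
    then have "Suc j < s" "real j \<noteq> 0" using assms by auto
    then show "f (Suc j) = real r / (real n^2 * (real n - 1)) * ((real n - 1 - real j)^2 / real j)"
      unfolding f_def P_pd_def using n by (simp add: field_simps power2_eq_square)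
  qed
  also have "sum f {max s (r+1)..n} = sum f {max (max s (r+1)) 3..n}"
  proof (rule sum.mono_neutral_right)
    show "\<forall>i \<in> {max s (r+1)..n} - {max (max s (r+1)) 3..n}. f i = 0"
    proof
      fix i assume "i \<in> {max s (r+1)..n} - {max (max s (r+1)) 3..n}"
      then have "i = 2" "\<not> i < s" using assms by auto
      then show "f i = 0" by (simp add: f_def P_pd_def)
    qed
  qed auto
  also have "\<dots> = real r * (real s - 1) / real n^2 *
      (\<Sum>k = max (max s (r+1)) 3..n. (real n - real k) / ((real k - 1) * (real k - 2)))"
    unfolding sum_distrib_left
  proof (rule sum.cong[OF refl])
    fix k assume k: "k \<in> {max (max s (r+1)) 3..n}"
    then have k12: "real k - 1 \<noteq> 0" "real k - 2 \<noteq> 0" and "\<not> k < s" by auto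
    then show "f k = real r * (real s - 1) / real n^2 * ((real n - real k) / ((real k - 1) * (real k - 2)))"
      unfolding f_def P_pd_def using second_phase_term[OF n k12, of "real r * (real s - 1)"]
      by (simp add: mult_ac)
  qed
  finally show ?thesis .
qed

lemma first_sum_bounds:
  fixes N :: real
  assumes "1 \<le> r" "r + 2 \<le> s"
  defines "C \<equiv> - 2 * N * (real s - 1 - real r) + ((real s - 2) * (real s - 1) - (real r - 1) * real r) / 2"
  shows "N^2 * ln ((real s - 1) / real r) + C \<le> (\<Sum>j = r..s - 2. (N - real j)^2 / real j)"
    and "(\<Sum>j = r..s - 2. (N - real j)^2 / real j) \<le> N^2 * (1 / real r + ln ((real s - 2) / real r)) + C"
proof -
  have sum: "(\<Sum>j = r..s - 2. (N - real j)^2 / real j) = N^2 * (\<Sum>j = r..s - 2. 1 / real j) + C"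
    using sum_sq_dist_div[of r "s - 2" N] assms by (simp add: C_def of_nat_diff algebra_simps)
  have "ln ((real s - 1) / real r) \<le> (\<Sum>j = r..s - 2. 1 / real j)"
    using ln_le_sum_inverse[of "r - 1" "s - 2"] assms by (simp add: of_nat_diff)
  from mult_left_mono[OF this zero_le_power2]
  show "N^2 * ln ((real s - 1) / real r) + C \<le> (\<Sum>j = r..s - 2. (N - real j)^2 / real j)"
    unfolding sum by simp
  have "(\<Sum>j = r..s - 2. 1 / real j) = 1 / real r + (\<Sum>j = Suc r..s - 2. 1 / real j)"
    using assms by (simp add: sum.atLeast_Suc_atMost)
  also have "(\<Sum>j = Suc r..s - 2. 1 / real j) \<le> ln ((real s - 2) / real r)"
    using sum_inverse_le_ln[of r "s - 2"] assms by (simp add: of_nat_diff)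
  finally have "(\<Sum>j = r..s - 2. 1 / real j) \<le> 1 / real r + ln ((real s - 2) / real r)" by simp
  from mult_left_mono[OF this zero_le_power2]
  show "(\<Sum>j = r..s - 2. (N - real j)^2 / real j) \<le> N^2 * (1 / real r + ln ((real s - 2) / real r)) + C"
    unfolding sum by simp
qed

lemma second_sum_lower:
  assumes "4 \<le> s" "s \<le> n"
  shows "(real n - 1) / (real s - 2) - 1 - ln ((real n - 2) / (real s - 3))
    \<le> (\<Sum>k = s..n. (real n - real k) / ((real k - 1) * (real k - 2)))"
proof -
  have "Suc (s - 3) = s - 2" "1 \<le> s - 3" "s - 3 \<le> n - 2" using assms by auto
  then have "(\<Sum>j = s - 2..n - 2. 1 / real j) \<le> ln ((real n - 2) / (real s - 3))"
    using sum_inverse_le_ln[of "s - 3" "n - 2"] assms by (simp add: of_nat_diff)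
  then show ?thesis using sum_telescoping[of s n] assms by simp
qed

lemma second_sum_le_psi:
  assumes "3 \<le> m" "m \<le> n"
  shows "(\<Sum>k = m..n. (real n - real k) / ((real k - 1) * (real k - 2)))
    \<le> psi ((real m - 2) / (real n - 1))"
proof -
  have "ln ((real n - 1) / (real m - 2)) \<le> (\<Sum>j = m - 2..n - 2. 1 / real j)"
  proof -
    have "Suc (m - 3) = m - 2" "real (n - 2) + 1 = real n - 1" "real (m - 3) + 1 = real m - 2"
      using assms by auto
    then show ?thesis using ln_le_sum_inverse[of "m - 3" "n - 2"] assms by simp
  qed
  moreover have "ln ((real m - 2) / (real n - 1)) = - ln ((real n - 1) / (real m - 2))"
    using assms by (simp add: ln_div)
  ultimately show ?thesis unfolding sum_telescoping[OF assms] psi_def by simp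
qed

lemma scaled_psi_le:
  fixes c x y N nn B :: real
  assumes "0 < N" "N \<le> nn" "0 < y" "y \<le> 1" "0 \<le> x" "0 \<le> c" "c \<le> N^2 * x * (y + 1/N)"
    and "B \<le> psi y"
  shows "c / nn^2 * B \<le> x * chi y + x / (y * N)"
proof -
  have psi: "0 \<le> psi y" "psi y \<le> 1/y" using psi_nonneg psi_le_inverse assms by auto
  have "c / nn^2 * B \<le> c / nn^2 * psi y" using assms by (intro mult_left_mono) auto
  also have "\<dots> \<le> c / N^2 * psi y"
    using assms psi by (intro mult_right_mono divide_left_mono power_mono) auto
  also have "\<dots> \<le> x * (y + 1/N) * psi y"
    using assms psi by (intro mult_right_mono) (auto simp: divide_le_eq mult_ac)
  also have "\<dots> = x * chi y + x * psi y / N" using assms by (simp add: chi_eq field_simps)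
  also have "x * psi y / N \<le> x * (1/y) / N" using assms psi by (intro divide_right_mono mult_left_mono) auto
  finally show ?thesis by simp
qed

lemma first_sum_upper:
  assumes "3 \<le> n" "1 \<le> r" "r + 2 \<le> s" "s < n"
  shows "real r / (real n^2 * (real n - 1)) * (\<Sum>j = r..s - 2. (real n - 1 - real j)^2 / real j)
    \<le> 1 / real n + real r / (real n - 1) *
       (phi ((real s - 2) / (real n - 1)) - phi (real r / (real n - 1)))"
proof -
  define nn where "nn = real n"
  define N where "N = real n - 1"
  define R where "R = real r"
  define S where "S = real s"
  define x where "x = R / N"
  define y where "y = (S - 2) / N"
  define L where "L = ln ((S - 2) / R)"
  have N: "2 \<le> N" "N = nn - 1" "S \<le> N" and R: "1 \<le> R" "R + 2 \<le> S"
    using assms by (auto simp: nn_def N_def R_def S_def)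
  have "(\<Sum>j = r..s - 2. (N - real j)^2 / real j)
      \<le> N^2 * (1 / R + L) - 2 * N * (S - 1 - R) + ((S - 2) * (S - 1) - (R - 1) * R) / 2"
    using first_sum_bounds(2)[OF assms(2,3), of N] by (simp add: L_def R_def S_def)
  then have "R / (nn^2 * N) * (\<Sum>j = r..s - 2. (N - real j)^2 / real j)
      \<le> R / (nn^2 * N) * (N^2 * (1 / R + L) - 2 * N * (S - 1 - R) + ((S - 2) * (S - 1) - (R - 1) * R) / 2)"
    using N R by (intro mult_left_mono) auto
  also have "\<dots> = N / nn^2 + R * N / nn^2 * (phi y - phi x) + R * N / nn^2 * (- 2/N + (S - 2 + R) / (2 * N^2))"
  proof -
    have "ln y - ln x = L" using N R by (simp add: x_def y_def L_def ln_div)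
    then have Q: "phi y - phi x = L - 2 * (y - x) + (y^2 - x^2) / 2"
      by (simp add: phi_def diff_divide_distrib)
    show ?thesis unfolding Q using N R by (simp add: x_def y_def field_simps power2_eq_square)
  qed
  also have "\<dots> \<le> 1 / nn + R / N * (phi y - phi x)"
  proof -
    have "N / nn^2 \<le> 1 / nn" using N by (simp add: field_simps power2_eq_square)
    moreover have "R * N / nn^2 \<le> R / N"
      using N R by (simp add: field_simps power2_eq_square mult_mono)
    then have "R * N / nn^2 * (phi y - phi x) \<le> R / N * (phi y - phi x)"
      using phi_mono[of x y] N R by (intro mult_right_mono) (auto simp: x_def y_def divide_right_mono)
    moreover have "(S - 2 + R) / (2 * N^2) \<le> 2 * N / (2 * N^2)"
      using N R by (intro divide_right_mono) auto
    then have "(S - 2 + R) / (2 * N^2) \<le> 2 / N"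
      using N by (simp add: power2_eq_square divide_le_eq)
    then have "R * N / nn^2 * (- 2/N + (S - 2 + R) / (2 * N^2)) \<le> 0"
      using N R by (intro mult_nonneg_nonpos) auto
    ultimately show ?thesis by linarith
  qed
  finally show ?thesis by (simp add: nn_def N_def R_def S_def x_def y_def)
qed

lemma E_pdc_upper_wide:
  assumes "3 \<le> n" "1 \<le> r" "r + 2 \<le> s" "s < n"
  shows "E_pdc n r s \<le>
    limit_payoff (real r / (real n - 1)) ((real s - 2) / (real n - 1)) + 3 / (real n - 1)"
proof -
  define N where "N = real n - 1"
  define x where "x = real r / N"
  define y where "y = (real s - 2) / N"
  have N: "2 \<le> N" "real s \<le> N" using assms by (auto simp: N_def)
  have y: "0 < y" "y \<le> 1" using assms N by (auto simp: y_def)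
  have m: "max (max s (r+1)) 3 = s" and rs: "r \<le> s" using assms by simp_all
  have "E_pdc n r s \<le> (1 / real n + x * (phi y - phi x)) + (x * chi y + x / (y * N))"
    unfolding E_pdc_split[OF assms(1,2) rs assms(4)] m
  proof (intro add_mono)
    show "real r * (real s - 1) / (real n)^2 * (\<Sum>k = s..n. (real n - real k) / ((real k - 1) * (real k - 2)))
        \<le> x * chi y + x / (y * N)"
    proof (rule scaled_psi_le)
      show "real r * (real s - 1) \<le> N^2 * x * (y + 1/N)"
        using N by (simp add: x_def y_def field_simps power2_eq_square)
      show "(\<Sum>k = s..n. (real n - real k) / ((real k - 1) * (real k - 2))) \<le> psi y"
        using second_sum_le_psi[of s n] assms by (simp add: y_def N_def)
    qed (use assms N y in \<open>auto simp: x_def N_def\<close>)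
  qed (use first_sum_upper[OF assms] assms in \<open>simp_all add: x_def y_def N_def\<close>)
  also have "x / (y * N) \<le> 1 / N"
  proof -
    have "real r / (real s - 2) \<le> 1" using assms by simp
    from divide_right_mono[OF this, of N] show ?thesis using N by (simp add: x_def y_def mult.commute)
  qed
  also have "1 / real n \<le> 1 / N" using N by (simp add: N_def divide_left_mono)
  finally have "E_pdc n r s \<le> limit_payoff x y + 2 / N"
    by (simp add: limit_payoff_def Phi_eq_phi_add_chi algebra_simps)
  also have "2 / N \<le> 3 / N" using N by (simp add: divide_right_mono)
  finally show ?thesis by (simp add: x_def y_def N_def)
qed

lemma E_pdc_upper_adjacent:
  assumes "3 \<le> s" "s < n"
  shows "E_pdc n (s - 1) s \<le>
    limit_payoff ((real s - 2) / (real n - 1)) ((real s - 2) / (real n - 1)) + 3 / (real n - 1)"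
proof -
  define N where "N = real n - 1"
  define y where "y = (real s - 2) / N"
  have N: "2 \<le> N" "real s \<le> N" using assms by (auto simp: N_def)
  have y: "0 < y" "y \<le> 1" using assms N by (auto simp: y_def)
  have "max (max s (s - 1 + 1)) 3 = s" "s - 2 < s - 1" "real (s - 1) = real s - 1"
    using assms by auto
  then have "E_pdc n (s - 1) s = (real s - 1) * (real s - 1) / (real n)^2 *
      (\<Sum>k = s..n. (real n - real k) / ((real k - 1) * (real k - 2)))"
    using E_pdc_split[of n "s - 1" s] assms by simp
  also have "\<dots> \<le> (y + 1/N) * chi y + (y + 1/N) / (y * N)"
  proof (rule scaled_psi_le)
    show "(real s - 1) * (real s - 1) \<le> N^2 * (y + 1/N) * (y + 1/N)"
      using N by (simp add: y_def field_simps power2_eq_square)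
    show "(\<Sum>k = s..n. (real n - real k) / ((real k - 1) * (real k - 2))) \<le> psi y"
      using second_sum_le_psi[of s n] assms by (simp add: y_def N_def)
  qed (use assms N y in \<open>auto simp: N_def\<close>)
  also have "chi y / N \<le> 1 / N" using chi_le_one[OF y] N by (simp add: divide_right_mono)
  then have "(y + 1/N) * chi y \<le> y * chi y + 1 / N" by (simp add: algebra_simps)
  also have "(y + 1/N) / (y * N) \<le> 2 / N"
  proof -
    have "y + 1/N = (real s - 1) / N" "y * N = real s - 2" using N by (simp_all add: y_def field_simps)
    then have "(y + 1/N) / (y * N) = (real s - 1) / (N * (real s - 2))" by simp
    also have "\<dots> \<le> 2 * (real s - 2) / (N * (real s - 2))"
      using assms N by (intro divide_right_mono) auto
    also have "\<dots> = 2 / N" using assms by (intro mult_divide_mult_cancel_right) simp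
    finally show ?thesis .
  qed
  finally show ?thesis by (simp add: limit_payoff_diag y_def N_def)
qed

lemma E_pdc_upper_equal:
  assumes "3 \<le> s" "s < n"
  shows "E_pdc n s s \<le>
    limit_payoff ((real s - 1) / (real n - 1)) ((real s - 1) / (real n - 1)) + 1 / (real n - 1)"
proof -
  define N where "N = real n - 1"
  define y where "y = (real s - 1) / N"
  have N: "2 \<le> N" "real s \<le> N" using assms by (auto simp: N_def)
  have y: "0 < y" "y \<le> 1" using assms N by (auto simp: y_def)
  have "max (max s (s + 1)) 3 = s + 1" "s - 2 < s" using assms by auto
  then have "E_pdc n s s = real s * (real s - 1) / (real n)^2 *
      (\<Sum>k = s + 1..n. (real n - real k) / ((real k - 1) * (real k - 2)))"
    using E_pdc_split[of n s s] assms by simp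
  also have "\<dots> \<le> y * chi y + y / (y * N)"
  proof (rule scaled_psi_le)
    show "real s * (real s - 1) \<le> N^2 * y * (y + 1/N)"
      using N by (simp add: y_def field_simps power2_eq_square)
    show "(\<Sum>k = s + 1..n. (real n - real k) / ((real k - 1) * (real k - 2))) \<le> psi y"
      using second_sum_le_psi[of "s + 1" n] assms by (simp add: y_def N_def)
  qed (use assms N y in \<open>auto simp: N_def\<close>)
  also have "y / (y * N) = 1 / N" using y by simp
  finally show ?thesis by (simp add: limit_payoff_diag y_def N_def)
qed

lemma E_pdc_upper_small:
  assumes "3 \<le> n" "1 \<le> r" "r \<le> s" "s \<le> 2"
  shows "E_pdc n r s \<le> 2 / (real n - 1)"
proof -
  define N where "N = real n - 1"
  have N: "2 \<le> N" using assms by (auto simp: N_def)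
  have "max (max s (r + 1)) 3 = 3" "s - 2 < r" using assms by auto
  then have "E_pdc n r s = real r * (real s - 1) / (real n)^2 *
      (\<Sum>k = 3..n. (real n - real k) / ((real k - 1) * (real k - 2)))"
    using E_pdc_split[of n r s] assms by simp
  also have "\<dots> \<le> 1/N * chi (1/N) + 1/N / (1/N * N)"
  proof (rule scaled_psi_le)
    have "real r * (real s - 1) \<le> 2" using assms
      by (cases "r = 1"; cases "s = 1") (auto simp: numeral_2_eq_2 le_Suc_eq)
    then show "real r * (real s - 1) \<le> N^2 * (1/N) * (1/N + 1/N)"
      using N by (simp add: power2_eq_square)
    show "(\<Sum>k = 3..n. (real n - real k) / ((real k - 1) * (real k - 2))) \<le> psi (1/N)"
      using second_sum_le_psi[of 3 n] assms by (simp add: N_def)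
  qed (use assms N in \<open>auto simp: N_def\<close>)
  also have "\<dots> \<le> 2 / N"
  proof -
    have "chi (1/N) / N \<le> 1 / N" using chi_le_one[of "1/N"] N by (simp add: divide_right_mono)
    moreover have "1/N * chi (1/N) + 1/N / (1/N * N) = chi (1/N) / N + 1/N" "2 / N = 1/N + 1/N"
      using N by simp_all
    ultimately show ?thesis by linarith
  qed
  finally show ?thesis by (simp add: N_def)
qed

lemma shifted_ratio_close:
  fixes X c m :: real
  assumes "0 \<le> X" "X \<le> m" "0 \<le> c" "c \<le> 2" "2 \<le> m"
  shows "\<bar>(X - c) / (m - 1) - X / m\<bar> \<le> 2 / (m - 1)"
proof -
  have "(X - c) / (m - 1) - X / m = (X - c * m) / (m * (m - 1))"
    using assms by (simp add: field_simps)
  moreover have cm: "c * m \<le> 2 * m" "0 \<le> c * m" using assms by (simp_all add: mult_right_mono)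
  have "\<bar>X - c * m\<bar> \<le> 2 * m" unfolding abs_le_iff using cm assms by linarith
  then have "\<bar>X - c * m\<bar> / (m * (m - 1)) \<le> 2 * m / (m * (m - 1))"
    using assms by (intro divide_right_mono) auto
  ultimately show ?thesis using assms by (simp add: abs_div)
qed

lemma E_pdc_upper:
  assumes "3 \<le> n" "r \<le> s" "s < n"
  shows "\<exists>a b. 0 \<le> a \<and> a \<le> b \<and> b \<le> 1 \<and>
    \<bar>a - real r / real n\<bar> \<le> 2 / (real n - 1) \<and> \<bar>b - real s / real n\<bar> \<le> 2 / (real n - 1) \<and>
    E_pdc n r s \<le> limit_payoff a b + 3 / (real n - 1)"
proof -
  define N where "N = real n - 1"
  have N: "2 \<le> N" "real s \<le> N" using assms by (auto simp: N_def)
  have close: "\<bar>(real X - c) / N - real X / real n\<bar> \<le> 2 / N" if "X \<le> n" "0 \<le> c" "c \<le> 2" for X c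
    using shifted_ratio_close[of "real X" "real n" c] that assms by (simp add: N_def)
  have rs: "r \<le> n" "s \<le> n" using assms by simp_all
  consider (zero) "r = 0" | (small) "1 \<le> r" "s \<le> 2" | (wide) "1 \<le> r" "r + 2 \<le> s"
    | (adjacent) "3 \<le> s" "r = s - 1" | (equal) "3 \<le> s" "r = s" using assms by linarith
  then show ?thesis
  proof cases
    case zero
    then show ?thesis using assms N
      by (intro exI[of _ 0] exI[of _ "real s / real n"]) (simp add: E_pdc_zero limit_payoff_def N_def)
  next
    case small
    have "real r / real n \<le> 2 / N" using small assms N by (intro frac_le) (auto simp: N_def)
    moreover have "E_pdc n r s \<le> 3 / N"
      using E_pdc_upper_small[of n r s] small assms N divide_right_mono[of 2 3 N] by (simp add: N_def)
    ultimately show ?thesis using small assms N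
      by (intro exI[of _ 0] exI[of _ 0]) (auto simp: limit_payoff_def N_def frac_le)
  next
    case wide
    then show ?thesis
      using E_pdc_upper_wide[of n r s] close[of r 0] close[of s 2] assms N rs
      by (intro exI[of _ "real r / N"] exI[of _ "(real s - 2) / N"])
        (simp add: N_def divide_right_mono)
  next
    case adjacent
    then have "real r - 1 = real s - 2" by simp
    then show ?thesis
      using E_pdc_upper_adjacent[of s n] adjacent close[of r 1] close[of s 2] assms N rs
      by (intro exI[of _ "(real s - 2) / N"] exI[of _ "(real s - 2) / N"]) (simp add: N_def)
  next
    case equal
    then show ?thesis
      using E_pdc_upper_equal[of s n] close[of r 1] close[of s 1] assms N rs
      by (intro exI[of _ "(real s - 1) / N"] exI[of _ "(real s - 1) / N"])
        (simp add: N_def divide_right_mono)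
  qed
qed

lemma E_pdc_upper_points:
  fixes M1 M2 :: "nat \<Rightarrow> nat"
  assumes "\<forall>\<^sub>F n in sequentially. 3 \<le> n \<and> admissible n (M1 n) (M2 n)"
  shows "\<exists>x y. \<forall>\<^sub>F n in sequentially. 0 \<le> x n \<and> x n \<le> y n \<and> y n \<le> 1 \<and>
    \<bar>real (M1 n) / real n - x n\<bar> \<le> 2 / (real n - 1) \<and> \<bar>real (M2 n) / real n - y n\<bar> \<le> 2 / (real n - 1) \<and>
    E_pdc n (M1 n) (M2 n) \<le> limit_payoff (x n) (y n) + 3 / (real n - 1)"
proof -
  have "\<forall>n. \<exists>a b. 3 \<le> n \<and> admissible n (M1 n) (M2 n) \<longrightarrow> 0 \<le> a \<and> a \<le> b \<and> b \<le> 1 \<and>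
      \<bar>real (M1 n) / real n - a\<bar> \<le> 2 / (real n - 1) \<and> \<bar>real (M2 n) / real n - b\<bar> \<le> 2 / (real n - 1) \<and>
      E_pdc n (M1 n) (M2 n) \<le> limit_payoff a b + 3 / (real n - 1)"
    using E_pdc_upper unfolding admissible_def by (simp add: abs_minus_commute)
  then obtain x y where "\<forall>n. 3 \<le> n \<and> admissible n (M1 n) (M2 n) \<longrightarrow> 0 \<le> x n \<and> x n \<le> y n \<and> y n \<le> 1 \<and>
      \<bar>real (M1 n) / real n - x n\<bar> \<le> 2 / (real n - 1) \<and> \<bar>real (M2 n) / real n - y n\<bar> \<le> 2 / (real n - 1) \<and>
      E_pdc n (M1 n) (M2 n) \<le> limit_payoff (x n) (y n) + 3 / (real n - 1)"
    by metis
  with assms show ?thesis by (intro exI[of _ x] exI[of _ y]) (auto elim: eventually_mono)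
qed

(* The lower estimate for E_pdc n r s obtained from the harmonic-sum bounds, in terms of
   a = r/n, b = s/n and e = 1/n; it is continuous at e = 0, where it equals limit_payoff a b. *)
definition payoff_lower :: "real \<Rightarrow> real \<Rightarrow> real \<Rightarrow> real" where
  "payoff_lower a b e =
     a * (1 - e) * ln ((b - e) / a) - 2 * a * (b - e - a)
     + a / (1 - e) * (((b - 2*e) * (b - e) - (a - e) * a) / 2)
     + a * (b - e) * ((1 - e) / (b - 2*e) - 1 - ln ((1 - 2*e) / (b - 3*e)))"

lemma payoff_lower_scaled:
  fixes R S m LA LB :: real
  assumes "m \<noteq> 0" "m \<noteq> 1" "R \<noteq> 0" "S \<noteq> 2" "S \<noteq> 3"
    and "LA = ln ((S - 1) / R)" "LB = ln ((m - 2) / (S - 3))"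
  shows "payoff_lower (R / m) (S / m) (1 / m) =
      R / (m^2 * (m - 1)) * ((m - 1)^2 * LA - 2 * (m - 1) * (S - 1 - R) + ((S - 2) * (S - 1) - (R - 1) * R) / 2)
      + R * (S - 1) / m^2 * ((m - 1) / (S - 2) - 1 - LB)"
proof -
  have nz: "m - 1 \<noteq> 0" "S - 2 \<noteq> 0" "S - 3 \<noteq> 0" using assms by auto
  have "(S / m - 1 / m) / (R / m) = (S - 1) / R"
    "(1 - 2 * (1 / m)) / (S / m - 3 * (1 / m)) = (m - 2) / (S - 3)"
    using assms nz by (simp_all add: field_simps)
  then have "payoff_lower (R / m) (S / m) (1 / m) =
      R / m * (1 - 1 / m) * LA - 2 * (R / m) * (S / m - 1 / m - R / m)
      + R / m / (1 - 1 / m) * (((S / m - 2 * (1 / m)) * (S / m - 1 / m) - (R / m - 1 / m) * (R / m)) / 2)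
      + R / m * (S / m - 1 / m) * ((1 - 1 / m) / (S / m - 2 * (1 / m)) - 1 - LB)"
    unfolding payoff_lower_def assms(6,7) by (simp only:)
  also have "R / m * (1 - 1 / m) * LA - 2 * (R / m) * (S / m - 1 / m - R / m)
      + R / m / (1 - 1 / m) * (((S / m - 2 * (1 / m)) * (S / m - 1 / m) - (R / m - 1 / m) * (R / m)) / 2)
      = R / (m^2 * (m - 1)) * ((m - 1)^2 * LA - 2 * (m - 1) * (S - 1 - R)
        + ((S - 2) * (S - 1) - (R - 1) * R) / 2)"
    using assms nz by (simp add: field_simps power2_eq_square)
  also have "R / m * (S / m - 1 / m) * ((1 - 1 / m) / (S / m - 2 * (1 / m)) - 1 - LB)
      = R * (S - 1) / m^2 * ((m - 1) / (S - 2) - 1 - LB)"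
    using assms nz by (simp add: field_simps power2_eq_square)
  finally show ?thesis .
qed

lemma E_pdc_lower:
  assumes "1 \<le> r" "r + 2 \<le> s" "4 \<le> s" "s < n"
  shows "payoff_lower (real r / real n) (real s / real n) (1 / real n) \<le> E_pdc n r s"
proof -
  define N where "N = real n - 1"
  define LA where "LA = ln ((real s - 1) / real r)"
  define LB where "LB = ln ((real n - 2) / (real s - 3))"
  have n3: "3 \<le> n" and rs: "r \<le> s" and m: "max (max s (r + 1)) 3 = s" using assms by auto
  have A: "N^2 * LA - 2 * N * (real s - 1 - real r) + ((real s - 2) * (real s - 1) - (real r - 1) * real r) / 2
      \<le> (\<Sum>j = r..s - 2. (N - real j)^2 / real j)"
    using first_sum_bounds(1)[OF assms(1,2), of N] by (simp add: LA_def)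
  have B: "N / (real s - 2) - 1 - LB \<le> (\<Sum>k = s..n. (real n - real k) / ((real k - 1) * (real k - 2)))"
    using second_sum_lower[of s n] assms by (simp add: LB_def N_def)
  have "payoff_lower (real r / real n) (real s / real n) (1 / real n) =
      real r / (real n^2 * N) * (N^2 * LA - 2 * N * (real s - 1 - real r)
        + ((real s - 2) * (real s - 1) - (real r - 1) * real r) / 2)
      + real r * (real s - 1) / real n^2 * (N / (real s - 2) - 1 - LB)"
    using payoff_lower_scaled[OF _ _ _ _ _ LA_def] assms by (simp add: N_def LB_def)
  also have "\<dots> \<le> E_pdc n r s"
    unfolding E_pdc_split[OF n3 assms(1) rs assms(4)] m
    using mult_left_mono[OF A, of "real r / (real n^2 * N)"]
      mult_left_mono[OF B, of "real r * (real s - 1) / real n^2"] assms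
    by (simp add: N_def)
  finally show ?thesis .
qed

section \<open>Convergence of the maximizers\<close>

lemma nat_floor_bounds:
  fixes x :: real
  assumes "0 \<le> x"
  shows "x - 1 < real (nat \<lfloor>x\<rfloor>)" "real (nat \<lfloor>x\<rfloor>) \<le> x"
  using assms by simp_all

lemma nat_floor_ratio_tendsto:
  fixes c :: real
  assumes "0 \<le> c"
  shows "(\<lambda>n. real (nat \<lfloor>c * real n\<rfloor>) / real n) \<longlonglongrightarrow> c"
proof (rule tendsto_sandwich[where f = "\<lambda>n. c - 1 / real n" and h = "\<lambda>_. c"])
  show "\<forall>\<^sub>F n in sequentially. c - 1 / real n \<le> real (nat \<lfloor>c * real n\<rfloor>) / real n"
    using eventually_gt_at_top[of 0]
  proof eventually_elim
    case (elim n)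
    have "(c * real n - 1) / real n \<le> real (nat \<lfloor>c * real n\<rfloor>) / real n"
      using nat_floor_bounds(1)[of "c * real n"] assms by (intro divide_right_mono) auto
    then show ?case using elim by (simp add: diff_divide_distrib)
  qed
  show "\<forall>\<^sub>F n in sequentially. real (nat \<lfloor>c * real n\<rfloor>) / real n \<le> c"
    using eventually_gt_at_top[of 0]
  proof eventually_elim
    case (elim n)
    then show ?case
      using nat_floor_bounds(2)[of "c * real n"] assms by (simp add: divide_le_eq)
  qed
  show "(\<lambda>n. c - 1 / real n) \<longlonglongrightarrow> c"
    using tendsto_diff[OF tendsto_const lim_1_over_n] by simp
qed simp

lemma const_div_pred_tendsto_0: "(\<lambda>n. c / (real n - 1)) \<longlonglongrightarrow> 0"
proof (rule tendsto_divide_0[OF tendsto_const])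
  have "filterlim (\<lambda>n. -1 + real n) at_top sequentially"
    by (rule filterlim_tendsto_add_at_top[OF tendsto_const filterlim_real_sequentially])
  then show "filterlim (\<lambda>n. real n - 1) at_infinity sequentially"
    by (simp add: filterlim_at_top_imp_at_infinity)
qed

lemma tendsto_of_separated_max:
  fixes F :: "real \<Rightarrow> real \<Rightarrow> real" and x y :: "nat \<Rightarrow> real"
  assumes sep: "\<And>\<epsilon>. 0 < \<epsilon> \<Longrightarrow>
      \<exists>\<delta>>0. \<forall>a b. D a b \<longrightarrow> (\<epsilon> \<le> \<bar>a - a0\<bar> \<or> \<epsilon> \<le> \<bar>b - b0\<bar>) \<longrightarrow> F a b \<le> m - \<delta>"
    and dom: "\<forall>\<^sub>F n in sequentially. D (x n) (y n)"
    and lim: "(\<lambda>n. F (x n) (y n)) \<longlonglongrightarrow> m"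
  shows "x \<longlonglongrightarrow> a0" "y \<longlonglongrightarrow> b0"
proof -
  have close: "\<forall>\<^sub>F n in sequentially. \<bar>x n - a0\<bar> < \<epsilon> \<and> \<bar>y n - b0\<bar> < \<epsilon>" if \<epsilon>: "0 < \<epsilon>" for \<epsilon>
  proof -
    obtain \<delta> where \<delta>: "0 < \<delta>"
      "\<forall>a b. D a b \<longrightarrow> (\<epsilon> \<le> \<bar>a - a0\<bar> \<or> \<epsilon> \<le> \<bar>b - b0\<bar>) \<longrightarrow> F a b \<le> m - \<delta>"
      using sep[OF \<epsilon>] by blast
    have "\<forall>\<^sub>F n in sequentially. m - \<delta> < F (x n) (y n)"
      using order_tendstoD(1)[OF lim] \<delta>(1) by simp
    with dom show ?thesis
      by eventually_elim (use \<delta>(2) in \<open>fastforce simp: not_less\<close>)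
  qed
  show "x \<longlonglongrightarrow> a0" "y \<longlonglongrightarrow> b0"
    by (auto intro!: tendstoI simp: dist_real_def elim: eventually_mono[OF close])
qed

lemma tendsto_of_close:
  fixes X Y d :: "nat \<Rightarrow> real"
  assumes "X \<longlonglongrightarrow> l" "\<forall>\<^sub>F n in sequentially. \<bar>Y n - X n\<bar> \<le> d n" "d \<longlonglongrightarrow> 0"
  shows "Y \<longlonglongrightarrow> l"
proof (rule tendsto_sandwich[where f = "\<lambda>n. X n - d n" and h = "\<lambda>n. X n + d n"])
  show "\<forall>\<^sub>F n in sequentially. X n - d n \<le> Y n" "\<forall>\<^sub>F n in sequentially. Y n \<le> X n + d n"
    using assms(2) by (auto elim: eventually_mono)
qed (use tendsto_diff[OF assms(1,3)] tendsto_add[OF assms(1,3)] in simp_all)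

context alpha_beta_thresholds
begin

lemma eventually_floor_thresholds:
  "\<forall>\<^sub>F n in sequentially. 1 \<le> nat \<lfloor>\<alpha> * real n\<rfloor> \<and> nat \<lfloor>\<alpha> * real n\<rfloor> + 2 \<le> nat \<lfloor>\<beta> * real n\<rfloor>
     \<and> 4 \<le> nat \<lfloor>\<beta> * real n\<rfloor> \<and> nat \<lfloor>\<beta> * real n\<rfloor> < n"
proof -
  have "\<forall>\<^sub>F n in sequentially. max (1/\<alpha>) (max (3/(\<beta>-\<alpha>)) (4/\<beta>)) \<le> real n"
    using filterlim_real_sequentially unfolding filterlim_at_top by blast
  then show ?thesis
  proof eventually_elim
    case (elim n)
    then have "1 \<le> \<alpha> * real n" "3 \<le> (\<beta> - \<alpha>) * real n" "4 \<le> \<beta> * real n"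
      using alpha_pos alpha_less_beta beta_pos by (auto simp: field_simps)
    moreover have "\<beta> * real n < real n"
    proof -
      have "0 < real n" using \<open>1 \<le> \<alpha> * real n\<close> alpha_pos by (auto intro: ccontr)
      then show ?thesis using beta_less_one by simp
    qed
    moreover have "0 \<le> \<alpha> * real n" "0 \<le> \<beta> * real n" using alpha_pos beta_pos by simp_all
    ultimately show ?case
      using nat_floor_bounds[of "\<alpha> * real n"] nat_floor_bounds[of "\<beta> * real n"]
      by (simp add: algebra_simps) linarith
  qed
qed

lemma payoff_lower_tendsto:
  assumes "a \<longlonglongrightarrow> \<alpha>" "b \<longlonglongrightarrow> \<beta>" "e \<longlonglongrightarrow> 0"
  shows "(\<lambda>n. payoff_lower (a n) (b n) (e n)) \<longlonglongrightarrow> limit_payoff \<alpha> \<beta>"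
proof -
  have "(\<lambda>n. payoff_lower (a n) (b n) (e n)) \<longlonglongrightarrow> payoff_lower \<alpha> \<beta> 0"
    unfolding payoff_lower_def using assms alpha_pos beta_pos
    by (auto intro!: tendsto_eq_intros)
  moreover have ln: "ln (\<beta> / \<alpha>) = ln \<beta> - ln \<alpha>" "ln (1 / \<beta>) = - ln \<beta>"
    using alpha_pos beta_pos by (simp_all add: ln_div)
  have "payoff_lower \<alpha> \<beta> 0 = limit_payoff \<alpha> \<beta>"
    unfolding payoff_lower_def limit_payoff_def Phi_def phi_def
    using beta_pos by (simp add: ln field_simps power2_eq_square)
  ultimately show ?thesis by simp
qed

lemma limit_payoff_le_optimum:
  fixes E :: "nat \<Rightarrow> real"
  assumes "\<forall>\<^sub>F n in sequentially. \<forall>r s. admissible n r s \<longrightarrow> E_pdc n r s \<le> E n"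
  shows "\<exists>L. L \<longlonglongrightarrow> limit_payoff \<alpha> \<beta> \<and> (\<forall>\<^sub>F n in sequentially. L n \<le> E n)"
proof -
  define r where "r n = nat \<lfloor>\<alpha> * real n\<rfloor>" for n
  define s where "s n = nat \<lfloor>\<beta> * real n\<rfloor>" for n
  define L where "L n = payoff_lower (real (r n) / real n) (real (s n) / real n) (1 / real n)" for n
  have "L \<longlonglongrightarrow> limit_payoff \<alpha> \<beta>"
    unfolding L_def r_def s_def using alpha_pos beta_pos
    by (intro payoff_lower_tendsto nat_floor_ratio_tendsto lim_1_over_n) simp_all
  moreover have "\<forall>\<^sub>F n in sequentially. L n \<le> E n"
    using assms eventually_floor_thresholds
  proof eventually_elim
    case (elim n)
    then have "L n \<le> E_pdc n (r n) (s n)"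
      unfolding L_def r_def s_def by (intro E_pdc_lower) auto
    also have "\<dots> \<le> E n" using elim by (simp add: r_def s_def admissible_def)
    finally show ?case .
  qed
  ultimately show ?thesis by blast
qed

lemma maximizers_tendsto:
  fixes M1 M2 :: "nat \<Rightarrow> nat"
  assumes maxim: "\<forall>\<^sub>F n in sequentially. 3 \<le> n \<and> admissible n (M1 n) (M2 n) \<and>
                    (\<forall>r s. admissible n r s \<longrightarrow> E_pdc n r s \<le> E_pdc n (M1 n) (M2 n))"
  shows "(\<lambda>n. real (M1 n) / real n) \<longlonglongrightarrow> \<alpha>" "(\<lambda>n. real (M2 n) / real n) \<longlonglongrightarrow> \<beta>"
    and "(\<lambda>n. E_pdc n (M1 n) (M2 n)) \<longlonglongrightarrow> limit_payoff \<alpha> \<beta>"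
proof -
  define d where "d n = 3 / (real n - 1)" for n :: nat
  have "\<forall>\<^sub>F n in sequentially. \<forall>r s. admissible n r s \<longrightarrow> E_pdc n r s \<le> E_pdc n (M1 n) (M2 n)"
    using maxim by (auto elim: eventually_mono)
  from limit_payoff_le_optimum[OF this] obtain L
    where L: "L \<longlonglongrightarrow> limit_payoff \<alpha> \<beta>" "\<forall>\<^sub>F n in sequentially. L n \<le> E_pdc n (M1 n) (M2 n)"
    by blast
  have "\<forall>\<^sub>F n in sequentially. 3 \<le> n \<and> admissible n (M1 n) (M2 n)"
    using maxim by (auto elim: eventually_mono)
  from E_pdc_upper_points[OF this] obtain x y where xy: "\<forall>\<^sub>F n in sequentially. 0 \<le> x n \<and> x n \<le> y n \<and> y n \<le> 1 \<and>
      \<bar>real (M1 n) / real n - x n\<bar> \<le> 2 / (real n - 1) \<and> \<bar>real (M2 n) / real n - y n\<bar> \<le> 2 / (real n - 1) \<and>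
      E_pdc n (M1 n) (M2 n) \<le> limit_payoff (x n) (y n) + d n"
    unfolding d_def by blast
  have d: "d \<longlonglongrightarrow> 0" unfolding d_def by (rule const_div_pred_tendsto_0)
  have payoff_le: "\<forall>\<^sub>F n in sequentially. limit_payoff (x n) (y n) \<le> limit_payoff \<alpha> \<beta>"
    using xy by (auto elim: eventually_mono intro: limit_payoff_le_max)
  show "(\<lambda>n. E_pdc n (M1 n) (M2 n)) \<longlonglongrightarrow> limit_payoff \<alpha> \<beta>"
  proof (rule tendsto_sandwich[OF L(2) _ L(1)])
    show "\<forall>\<^sub>F n in sequentially. E_pdc n (M1 n) (M2 n) \<le> limit_payoff \<alpha> \<beta> + d n"
      using xy payoff_le by eventually_elim linarith
  qed (use tendsto_add[OF tendsto_const d] in simp)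
  have "(\<lambda>n. limit_payoff (x n) (y n)) \<longlonglongrightarrow> limit_payoff \<alpha> \<beta>"
  proof (rule tendsto_sandwich[OF _ payoff_le _ tendsto_const])
    show "\<forall>\<^sub>F n in sequentially. L n - d n \<le> limit_payoff (x n) (y n)"
      using xy L(2) by eventually_elim linarith
  qed (use tendsto_diff[OF L(1) d] in simp)
  moreover have "\<forall>\<^sub>F n in sequentially. 0 \<le> x n \<and> x n \<le> y n \<and> y n \<le> 1"
    using xy by (auto elim: eventually_mono)
  ultimately have x: "x \<longlonglongrightarrow> \<alpha>" and y: "y \<longlonglongrightarrow> \<beta>"
    using tendsto_of_separated_max[where D = "\<lambda>a b. 0 \<le> a \<and> a \<le> b \<and> b \<le> 1" and F = limit_payoff,
        OF limit_payoff_separation]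
    by simp_all
  have "\<forall>\<^sub>F n in sequentially. \<bar>real (M1 n) / real n - x n\<bar> \<le> 2 / (real n - 1)"
    "\<forall>\<^sub>F n in sequentially. \<bar>real (M2 n) / real n - y n\<bar> \<le> 2 / (real n - 1)"
    using xy by (auto elim: eventually_mono)
  then show "(\<lambda>n. real (M1 n) / real n) \<longlonglongrightarrow> \<alpha>" "(\<lambda>n. real (M2 n) / real n) \<longlonglongrightarrow> \<beta>"
    using tendsto_of_close[OF x _ const_div_pred_tendsto_0] tendsto_of_close[OF y _ const_div_pred_tendsto_0]
    by simp_all
qed

end

theorem theorem9:
  fixes M1 M2 :: "nat \<Rightarrow> nat" and \<alpha> \<beta> :: real
  assumes maxim: "\<And>n. n > 2 \<Longrightarrow> admissible n (M1 n) (M2 n) \<and>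
                    (\<forall>r s. admissible n r s \<longrightarrow> E_pdc n r s \<le> E_pdc n (M1 n) (M2 n))"
    and beta: "0 < \<beta>" "\<beta> < 1" "-2 + 1/\<beta> + \<beta> + ln \<beta> = 0"
    and alpha: "0 < \<alpha>" "\<alpha> < \<beta>"
      "1 - 1/\<beta> - 2*\<beta> - \<beta>^2/2 + 4*\<alpha> - 3*\<alpha>^2/2 - ln \<alpha> = 0"
  shows "(\<lambda>n. real (M1 n) / real n) \<longlonglongrightarrow> \<alpha> \<and>
         (\<lambda>n. real (M2 n) / real n) \<longlonglongrightarrow> \<beta> \<and>
         (\<lambda>n. E_pdc n (M1 n) (M2 n)) \<longlonglongrightarrow>
           \<alpha>/2 * (2 - 6*\<beta> + \<beta>^2 + 4*\<alpha> - \<alpha>^2 + 2*(1+\<beta>)*ln \<beta> - 2*ln \<alpha>)"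
proof -
  interpret beta_threshold \<beta>
    using beta by unfold_locales (simp_all add: dPhi_def)
  interpret alpha_beta_thresholds \<beta> \<alpha>
    using alpha by unfold_locales (simp_all add: dpayoff_def Phi_beta)
  have "\<forall>\<^sub>F n in sequentially. 3 \<le> n \<and> admissible n (M1 n) (M2 n) \<and>
      (\<forall>r s. admissible n r s \<longrightarrow> E_pdc n r s \<le> E_pdc n (M1 n) (M2 n))"
    using eventually_ge_at_top[of 3] by eventually_elim (use maxim in simp)
  from maximizers_tendsto[OF this] show ?thesis by (simp add: limit_payoff_explicit)
qed

end
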